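(* Let $\alpha>0$ and let $b:\mathbb{R}^+\times\mathbb{R}^2\to\mathbb{R}$ satisfy $b\in W^{1,\infty}$ and $b>\alpha$. Consider the formal Hilbert expansion $f^\varepsilon=\sum_k\varepsilon^kf_k$, $\mathbf{E}^\varepsilon=\sum_k\varepsilon^k\mathbf{E}_k$ of solutions of $$\varepsilon\,\partial_t f^\varepsilon+\mathbf{v}\cdot\nabla_{\mathbf{x}}f^\varepsilon+\Big(\mathbf{E}^\varepsilon+\frac{b}{\varepsilon}\mathbf{v}^\perp\Big)\cdot\nabla_{\mathbf{v}}f^\varepsilon=0,\quad -\Delta\phi^\varepsilon=\int_{\mathbb{R}^3}f^\varepsilon\,d\mathbf{v},\quad\mathbf{E}^\varepsilon=-\nabla_{\mathbf{x}}\phi^\varepsilon,\quad f^\varepsilon(0)=\sum_k\varepsilon^kf_{{\rm in},k},$$ so that $\mathbf{E}_k=-\nabla\phi_k$ with $-\Delta\phi_k=\int f_k\,d\mathbf{v}$ and $f_k(0)=f_{{\rm in},k}$. Let the leading order be $f_0(t,\mathbf{x},\mathbf{v})=F(t,\mathbf{x},w,v_\parallel)$, $\mathbf{E}_0=\mathbf{E}_F=-\nabla\phi_F$ with $-\Delta\phi_F=2\pi\int_{\mathbb{R}^+\times\mathbb{R}}F\,w\,dw\,dv_\parallel$. Then the equation $$\mathcal{L}f_1=\mathbf{v}\cdot\nabla_{\mathbf{x}}f_0+\mathbf{E}_0\cdot\nabla_{\mathbf{v}}f_0,\qquad \mathcal{L}f:=-b(t,\mathbf{x}_\perp)\,\mathbf{v}^\perp\cdot\nabla_{\mathbf{v}}f,$$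 admits a solution $f_1$ if and only if $F$ satisfies $$v_\parallel\,\partial_{x_\parallel}F-\partial_{x_\parallel}\phi_F\,\partial_{v_\parallel}F=0.$$ Moreover, if this condition is satisfied, then there exists a function $P=P(t,\mathbf{x},w,v_\parallel)$ in the kernel of $\mathcal{L}$ such that $$f_1(t,\mathbf{x},\mathbf{v})=-\frac{1}{b(t,\mathbf{x}_\perp)}\,\mathbf{e}_\theta\cdot\mathbf{G}(t,\mathbf{x},w,v_\parallel)+P(t,\mathbf{x},w,v_\parallel),\qquad \mathbf{E}_1(t,\mathbf{x})=\mathbf{E}_P:=-\nabla\phi_P,$$ where $\mathbf{G}=w\,\nabla_{\mathbf{x}_\perp}F-\nabla_{\mathbf{x}_\perp}\phi_F\,\partial_wF$, $\phi_P$ solves $-\Delta\phi_P=2\pi\int_{\mathbb{R}^+\times\mathbb{R}}P\,w\,dw\,dv_\parallel$, and at time $t=0$, $P(0)=\Pi f_1(0,\mathbf{x},\mathbf{v})$.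
   Context: Notation: $\mathbf{x}=(\mathbf{x}_\perp,x_\parallel)$, $\mathbf{x}_\perp=(x,y)$, $x_\parallel=z$; $\mathbf{v}=(\mathbf{v}_\perp,v_\parallel)$, $\mathbf{v}_\perp=(v_x,v_y)$, $v_\parallel=v_z$; $\mathbf{v}^\perp=(v_y,-v_x,v_z)$. Polar coordinates $v_x=w\cos\theta$, $v_y=w\sin\theta$, $\mathbf{e}_w=(\cos\theta,\sin\theta)$, $\mathbf{e}_\theta=(-\sin\theta,\cos\theta)$. Gyroaverage: $\Pi f(w,v_\parallel)=\frac1{2\pi}\int_0^{2\pi}f\,d\theta$. All functions are assumed smooth (formal setting). *)

theory Defs
  imports "HOL-Analysis.Analysis"
begin

definition pdir :: "'a::real_normed_vector \<Rightarrow> ('a \<Rightarrow> real) \<Rightarrow> 'a \<Rightarrow> real" where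
  "pdir u g x = deriv (\<lambda>s. g (x + s *\<^sub>R u)) 0"

coinductive smooth :: "('a::euclidean_space \<Rightarrow> real) \<Rightarrow> bool" where
  "\<lbrakk>\<forall>x. g differentiable (at x); \<forall>u\<in>Basis. smooth (pdir u g)\<rbrakk> \<Longrightarrow> smooth g"

definition px :: "3 \<Rightarrow> (real^3 \<Rightarrow> real) \<Rightarrow> real^3 \<Rightarrow> real" where
  "px i g x = pdir (axis i 1) g x"

definition grad3 :: "(real^3 \<Rightarrow> real) \<Rightarrow> real^3 \<Rightarrow> real^3" where
  "grad3 g x = (\<chi> i. px i g x)"

definition lap :: "(real^3 \<Rightarrow> real) \<Rightarrow> real^3 \<Rightarrow> real" where
  "lap g x = (\<Sum>i\<in>UNIV. px i (px i g) x)"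

definition xperp :: "real^3 \<Rightarrow> real^2" where
  "xperp x = vector [x$1, x$2]"

definition wperp :: "real^3 \<Rightarrow> real" where
  "wperp v = sqrt ((v$1)\<^sup>2 + (v$2)\<^sup>2)"

definition vperp :: "real^3 \<Rightarrow> real^3" where
  "vperp v = vector [v$2, -(v$1), 0]"

text \<open>e_theta = (-sin theta, cos theta), expressed in Cartesian velocity coordinates
  (meaningful for v_perp \<noteq> 0).\<close>
definition e_theta :: "real^3 \<Rightarrow> real^2" where
  "e_theta v = vector [-(v$2) / wperp v, v$1 / wperp v]"

definition gyro :: "(real^3 \<Rightarrow> real) \<Rightarrow> real \<Rightarrow> real \<Rightarrow> real" where
  "gyro g w u = 1 / (2 * pi) * integral {0..2*pi} (\<lambda>\<theta>. g (vector [w * cos \<theta>, w * sin \<theta>, u]))"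

definition f0_of :: "(real \<Rightarrow> real^3 \<Rightarrow> real \<Rightarrow> real \<Rightarrow> real) \<Rightarrow> real \<Rightarrow> real^3 \<Rightarrow> real^3 \<Rightarrow> real" where
  "f0_of F t x v = F t x (wperp v) (v$3)"

definition Lop :: "(real \<Rightarrow> real^2 \<Rightarrow> real) \<Rightarrow> (real \<Rightarrow> real^3 \<Rightarrow> real^3 \<Rightarrow> real) \<Rightarrow> real \<Rightarrow> real^3 \<Rightarrow> real^3 \<Rightarrow> real" where
  "Lop b f t x v = - b t (xperp x) * (vperp v \<bullet> grad3 (f t x) v)"

definition solves_L1 :: "(real \<Rightarrow> real^2 \<Rightarrow> real) \<Rightarrow> (real \<Rightarrow> real^3 \<Rightarrow> real \<Rightarrow> real \<Rightarrow> real)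
    \<Rightarrow> (real \<Rightarrow> real^3 \<Rightarrow> real) \<Rightarrow> (real \<Rightarrow> real^3 \<Rightarrow> real^3 \<Rightarrow> real) \<Rightarrow> bool" where
  "solves_L1 b F phiF f1 \<longleftrightarrow>
     (\<forall>t\<ge>0. \<forall>x v. f1 t x differentiable (at v) \<and>
        Lop b f1 t x v =
          v \<bullet> grad3 (\<lambda>y. f0_of F t y v) x + (- grad3 (phiF t) x) \<bullet> grad3 (f0_of F t x) v)"

definition drift_cond :: "(real \<Rightarrow> real^3 \<Rightarrow> real \<Rightarrow> real \<Rightarrow> real) \<Rightarrow> (real \<Rightarrow> real^3 \<Rightarrow> real) \<Rightarrow> bool" where
  "drift_cond F phiF \<longleftrightarrow>
     (\<forall>t\<ge>0. \<forall>x w u. w \<ge> 0 \<longrightarrow>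
        u * px 3 (\<lambda>y. F t y w u) x - px 3 (phiF t) x * deriv (\<lambda>s. F t x w s) u = 0)"

definition Gvec :: "(real \<Rightarrow> real^3 \<Rightarrow> real \<Rightarrow> real \<Rightarrow> real) \<Rightarrow> (real \<Rightarrow> real^3 \<Rightarrow> real)
    \<Rightarrow> real \<Rightarrow> real^3 \<Rightarrow> real \<Rightarrow> real \<Rightarrow> real^2" where
  "Gvec F phiF t x w u = vector
     [w * px 1 (\<lambda>y. F t y w u) x - px 1 (phiF t) x * deriv (\<lambda>s. F t x s u) w,
      w * px 2 (\<lambda>y. F t y w u) x - px 2 (phiF t) x * deriv (\<lambda>s. F t x s u) w]"

definition poisson_red :: "(real \<Rightarrow> real^3 \<Rightarrow> real) \<Rightarrow> (real \<Rightarrow> real^3 \<Rightarrow> real \<Rightarrow> real \<Rightarrow> real) \<Rightarrow> bool" where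
  "poisson_red phi Q \<longleftrightarrow>
     (\<forall>t\<ge>0. \<forall>x. has_bochner_integral lborel
        (\<lambda>p::real \<times> real. indicator ({0..} \<times> UNIV) p * (2 * pi * Q t x (fst p) (snd p) * fst p))
        (- lap (phi t) x))"

definition poisson_full :: "(real \<Rightarrow> real^3 \<Rightarrow> real) \<Rightarrow> (real \<Rightarrow> real^3 \<Rightarrow> real^3 \<Rightarrow> real) \<Rightarrow> bool" where
  "poisson_full phi f \<longleftrightarrow>
     (\<forall>t\<ge>0. \<forall>x. has_bochner_integral lborel (f t x) (- lap (phi t) x))"

end

theory Submission
  imports Defs
begin

text \<open>Since \<open>\<partial>\<^sub>s f(rot s v) = -v\<^sup>\<perp>(rot s v) \<bullet> \<nabla>\<^sub>v f\<close> for the rotation \<open>rot s\<close> about the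
  \<open>v\<^sub>\<parallel>\<close>-axis, \<open>L\<close> is \<open>b\<close> times the derivative along the gyration circles. For the gyrotropic
  \<open>f\<^sub>0\<close> the right-hand side equals \<open>v\<^sub>\<perp> \<bullet> G / w\<close>, a first Fourier mode in the gyroangle, plus
  the term \<open>v\<^sub>\<parallel> \<partial>\<^sub>x\<^sub>\<parallel>F - \<partial>\<^sub>x\<^sub>\<parallel>\<phi>\<^sub>F \<partial>\<^sub>v\<^sub>\<parallel>F\<close>, which is constant on circles. Integrating
  over a circle, the equation is solvable only if that constant vanishes, and then
  \<open>-(1/b) e\<^sub>\<theta> \<bullet> G\<close> is a solution. Any other solution differs from it by a function \<open>P\<close>
  constant on circles, which must be the gyroaverage of \<open>f\<^sub>1\<close>; integrating the velocity
  in cylindrical coordinates turns the Poisson equation for \<open>f\<^sub>1\<close> into the reduced one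
  for \<open>P\<close>.\<close>

section \<open>Cylindrical coordinates in velocity space\<close>

lemma vector_3_eq_axis:
  "(vector [a, b, c] :: real^3) = a *\<^sub>R axis 1 1 + b *\<^sub>R axis 2 1 + c *\<^sub>R axis 3 1"
  by (simp add: vec_eq_iff forall_3 axis_def)

lemma prod_Basis_vec3:
  "(\<Prod>b\<in>(Basis::(real^3) set). h b) = h (axis 1 1) * h (axis 2 1) * h (axis 3 1)"
proof -
  have B: "(Basis::(real^3) set) = {axis 1 1, axis 2 1, axis 3 1}"
    unfolding Basis_vec_def by (auto, metis exhaust_3)
  have "axis (1::3) (1::real) \<noteq> axis 2 1" "axis (1::3) (1::real) \<noteq> axis 3 1"
    "axis (2::3) (1::real) \<noteq> axis 3 1"
    by (auto simp: axis_eq_axis)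
  then show ?thesis unfolding B by (simp add: mult.assoc)
qed

definition vec3_of_triple :: "(real \<times> real) \<times> real \<Rightarrow> real^3" where
  "vec3_of_triple p = vector [fst (fst p), snd (fst p), snd p]"

lemma vec3_of_triple_measurable[measurable]: "vec3_of_triple \<in> borel_measurable borel"
  unfolding vec3_of_triple_def vector_3_eq_axis
  by (intro borel_measurable_continuous_onI continuous_intros)

lemma distr_vec3_of_triple: "distr lborel borel vec3_of_triple = (lborel :: (real^3) measure)"
proof (rule lborel_eqI[symmetric])
  fix l u :: "real^3"
  assume "\<And>b. b \<in> Basis \<Longrightarrow> l \<bullet> b \<le> u \<bullet> b"
  then have le: "l$i \<le> u$i" for i
    by (auto simp: Basis_vec_def cart_eq_inner_axis)
  have pre: "vec3_of_triple -` box l u = ({l$1<..<u$1} \<times> {l$2<..<u$2}) \<times> {l$3<..<u$3}"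
    unfolding vec3_of_triple_def by (auto simp: mem_box_cart forall_3)
  have "emeasure (distr lborel borel vec3_of_triple) (box l u) = emeasure lborel (vec3_of_triple -` box l u)"
    by (subst emeasure_distr) auto
  also have "\<dots> = emeasure (lborel \<Otimes>\<^sub>M lborel) (({l$1<..<u$1} \<times> {l$2<..<u$2}) \<times> {l$3<..<u$3})"
    unfolding pre lborel_prod ..
  also have "\<dots> = emeasure lborel ({l$1<..<u$1} \<times> {l$2<..<u$2}) * emeasure lborel {l$3<..<u$3}"
    by (intro lborel.emeasure_pair_measure_Times) (auto intro!: borel_open open_Times)
  also have "emeasure lborel ({l$1<..<u$1} \<times> {l$2<..<u$2})
      = emeasure (lborel \<Otimes>\<^sub>M lborel) ({l$1<..<u$1} \<times> {l$2<..<u$2})"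
    unfolding lborel_prod ..
  also have "\<dots> = emeasure lborel {l$1<..<u$1} * emeasure lborel {l$2<..<u$2}"
    by (intro lborel.emeasure_pair_measure_Times) auto
  finally show "emeasure (distr lborel borel vec3_of_triple) (box l u) = (\<Prod>b\<in>Basis. (u - l) \<bullet> b)"
    using le unfolding prod_Basis_vec3
    by (simp add: cart_eq_inner_axis[symmetric] ennreal_mult[symmetric] inner_diff_left)
qed simp

lemma has_absolute_integral_change_of_variables_scalar:
  fixes f :: "real^'m::{finite,wellorder} \<Rightarrow> real" and g :: "real^'m::_ \<Rightarrow> real^'m::_"
  assumes S: "S \<in> sets lebesgue"
    and g': "\<And>x. x \<in> S \<Longrightarrow> (g has_derivative g' x) (at x within S)"
    and inj: "inj_on g S"
    and f: "f absolutely_integrable_on (g ` S)"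
  shows "(\<lambda>x. \<bar>det (matrix (g' x))\<bar> * f (g x)) absolutely_integrable_on S \<and>
         integral S (\<lambda>x. \<bar>det (matrix (g' x))\<bar> * f (g x)) = integral (g ` S) f"
proof -
  have vec: "bounded_linear (vec :: real \<Rightarrow> real^1)"
    using linear_conv_bounded_linear linear_vec by blast
  define h where "h x = \<bar>det (matrix (g' x))\<bar> *\<^sub>R (vec (f (g x)) :: real^1)" for x
  have "(\<lambda>x. vec (f x) :: real^1) absolutely_integrable_on g ` S"
    using absolutely_integrable_linear[OF f vec] by (simp add: o_def)
  moreover have "integral (g ` S) (\<lambda>x. vec (f x) :: real^1) = vec (integral (g ` S) f)"
    using integral_linear[OF set_lebesgue_integral_eq_integral(1)[OF f] vec] by (simp add: o_def)
  ultimately have "h absolutely_integrable_on S \<and> integral S h = vec (integral (g ` S) f)"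
    unfolding h_def by (intro has_absolute_integral_change_of_variables[OF S g' inj, THEN iffD2] conjI)
  then have h: "h absolutely_integrable_on S" "integral S h = vec (integral (g ` S) f)"
    by auto
  have h1: "(\<lambda>x. h x $ 1) = (\<lambda>x. \<bar>det (matrix (g' x))\<bar> * f (g x))"
    by (simp add: h_def)
  show ?thesis
    using absolutely_integrable_linear[OF h(1) bounded_linear_vec_nth[of 1]]
      integral_linear[OF set_lebesgue_integral_eq_integral(1)[OF h(1)] bounded_linear_vec_nth[of 1]] h(2)
    by (simp add: o_def h1)
qed

text \<open>Cylindrical coordinates are ordered \<open>(w, v\<^sub>\<parallel>, \<theta>)\<close>, so that integrating out the last one
  leaves the reduced variables of \<open>poisson_red\<close>.\<close>

definition cyl :: "real^3 \<Rightarrow> real^3" where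
  "cyl y = vector [y$1 * cos (y$3), y$1 * sin (y$3), y$2]"

definition cyl_derivative :: "real^3 \<Rightarrow> real^3 \<Rightarrow> real^3" where
  "cyl_derivative y h = vector [h$1 * cos (y$3) - y$1 * sin (y$3) * h$3,
                                h$1 * sin (y$3) + y$1 * cos (y$3) * h$3, h$2]"

definition cyl_domain :: "(real^3) set" where
  "cyl_domain = {y. 0 < y$1 \<and> 0 < y$3 \<and> y$3 < 2*pi}"

lemma cyl_has_derivative: "(cyl has_derivative cyl_derivative y) (at y)"
proof -
  have e: "cyl_derivative y = (\<lambda>h. (h$1 * cos (y$3) + y$1 * (- sin (y$3) * h$3)) *\<^sub>R axis 1 1
     + (h$1 * sin (y$3) + y$1 * (cos (y$3) * h$3)) *\<^sub>R axis 2 1 + h$2 *\<^sub>R axis 3 1)"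
    by (auto simp: cyl_derivative_def vector_3_eq_axis fun_eq_iff algebra_simps)
  show ?thesis unfolding e cyl_def vector_3_eq_axis
    by (rule derivative_eq_intros bounded_linear.has_derivative[OF bounded_linear_vec_nth] refl)+
       (auto simp: algebra_simps)
qed

lemma det_cyl_derivative: "det (matrix (cyl_derivative y)) = - y$1"
proof -
  have "det (matrix (cyl_derivative y)) = - y$1 * (cos (y$3))^2 - y$1 * (sin (y$3))^2"
    by (simp add: det_3 matrix_def cyl_derivative_def vector_3 axis_def algebra_simps power2_eq_square)
  also have "\<dots> = - y$1" by (simp add: algebra_simps flip: distrib_left)
  finally show ?thesis .
qed

lemma continuous_on_cyl: "continuous_on UNIV cyl"
  unfolding cyl_def vector_3_eq_axis by (intro continuous_intros)

lemma open_cyl_domain: "open cyl_domain"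
  unfolding cyl_domain_def by (intro open_Collect_conj open_Collect_less continuous_intros)

lemma inj_on_cyl: "inj_on cyl cyl_domain"
proof (rule inj_onI)
  fix x y assume x: "x \<in> cyl_domain" and y: "y \<in> cyl_domain" and e: "cyl x = cyl y"
  have e1: "x$1 * cos (x$3) = y$1 * cos (y$3)" and e2: "x$1 * sin (x$3) = y$1 * sin (y$3)"
    and e3: "x$2 = y$2"
    using e by (auto simp: cyl_def vec_eq_iff forall_3)
  have "(x$1)^2 = (x$1 * cos (x$3))^2 + (x$1 * sin (x$3))^2"
    by (simp add: power_mult_distrib flip: distrib_left)
  also have "\<dots> = (y$1 * cos (y$3))^2 + (y$1 * sin (y$3))^2" using e1 e2 by simp
  also have "\<dots> = (y$1)^2" by (simp add: power_mult_distrib flip: distrib_left)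
  finally have r: "x$1 = y$1" using x y by (simp add: cyl_domain_def power2_eq_iff_nonneg)
  then have "cos (x$3) = cos (y$3)" "sin (x$3) = sin (y$3)"
    using e1 e2 x by (auto simp: cyl_domain_def)
  then obtain n :: int where n: "x$3 = y$3 + 2*pi*n" using sin_cos_eq_iff by metis
  have "0 < y$3" "y$3 < 2*pi" "0 < x$3" "x$3 < 2*pi" using x y by (auto simp: cyl_domain_def)
  then have "2*pi*(-1) < 2*pi*n" "2*pi*n < 2*pi*1" using n by linarith+
  then have "-1 < real_of_int n" "real_of_int n < 1"
    using pi_gt_zero by (simp_all only: mult_less_cancel_left)
  then have "n = 0" by linarith
  then show "x = y" using n r e3 by (simp add: vec_eq_iff forall_3)
qed

lemma cyl_image_complement: "UNIV - cyl ` cyl_domain \<subseteq> {v. v$2 = 0}"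
proof
  fix v :: "real^3" assume v: "v \<in> UNIV - cyl ` cyl_domain"
  show "v \<in> {v. v$2 = 0}"
  proof (rule ccontr)
    assume "v \<notin> {v. v$2 = 0}"
    then have v2: "v$2 \<noteq> 0" by simp
    define r where "r = sqrt ((v$1)^2 + (v$2)^2)"
    have r: "r > 0" unfolding r_def using v2 by (simp add: add_nonneg_pos)
    have "(v$1/r)^2 + (v$2/r)^2 = 1"
      using r v2 unfolding r_def by (simp add: power_divide flip: add_divide_distrib)
    then obtain t where t: "0 \<le> t" "t < 2*pi" "v$1/r = cos t" "v$2/r = sin t"
      using sincos_total_2pi by metis
    have "t \<noteq> 0" using t v2 r by auto
    then have "vector [r, v$3, t] \<in> cyl_domain" using t r by (simp add: cyl_domain_def vector_3)
    moreover have "cyl (vector [r, v$3, t]) = v"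
      using t r by (auto simp: cyl_def vec_eq_iff forall_3 field_simps)
    ultimately show False using v by (metis DiffD2 image_eqI)
  qed
qed

lemma cyl_change_of_variables:
  fixes f :: "real^3 \<Rightarrow> real"
  assumes f: "integrable lborel f"
  shows "(\<lambda>y. y$1 * f (cyl y)) absolutely_integrable_on cyl_domain \<and>
         integral cyl_domain (\<lambda>y. y$1 * f (cyl y)) = integral\<^sup>L lborel f"
proof -
  have "f \<in> borel_measurable borel" using borel_measurable_integrable[OF f] by simp
  then have "integrable lebesgue f" using f by (simp add: integrable_completion)
  then have fU: "f absolutely_integrable_on UNIV" by (simp add: set_integrable_def)
  have neg: "negligible {x \<in> UNIV - cyl ` cyl_domain. f x \<noteq> 0}"
    by (rule negligible_subset[OF negligible_standard_hyperplane_cart[of 2]])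
       (use cyl_image_complement in auto)
  have neg0: "negligible {x \<in> cyl ` cyl_domain - UNIV. f x \<noteq> 0}" by simp
  have "integral (cyl ` cyl_domain) f = integral UNIV f"
    using integral_spike_set[OF neg neg0] by simp
  also have "\<dots> = integral\<^sup>L lborel f" by (rule integral_lborel[OF f])
  finally have I: "integral (cyl ` cyl_domain) f = integral\<^sup>L lborel f" .
  have "cyl_domain \<in> sets lebesgue"
    using open_cyl_domain by (intro sets_completionI_sets) (auto intro: borel_open)
  from has_absolute_integral_change_of_variables_scalar[OF this
      has_derivative_at_withinI[OF cyl_has_derivative] inj_on_cyl
      absolutely_integrable_spike_set[OF fU neg neg0]]
  have "(\<lambda>y. \<bar>y$1\<bar> * f (cyl y)) absolutely_integrable_on cyl_domain \<and>
        integral cyl_domain (\<lambda>y. \<bar>y$1\<bar> * f (cyl y)) = integral\<^sup>L lborel f"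
    by (simp add: det_cyl_derivative I)
  then have abs: "(\<lambda>y. \<bar>y$1\<bar> * f (cyl y)) absolutely_integrable_on cyl_domain"
    and int: "integral cyl_domain (\<lambda>y. \<bar>y$1\<bar> * f (cyl y)) = integral\<^sup>L lborel f"
    by auto
  have eq: "\<And>y. y \<in> cyl_domain \<Longrightarrow> \<bar>y$1\<bar> * f (cyl y) = y$1 * f (cyl y)"
    by (simp add: cyl_domain_def)
  have "(\<lambda>y. y$1 * f (cyl y)) absolutely_integrable_on cyl_domain"
    using absolutely_integrable_spike_eq[of "{}" cyl_domain "\<lambda>y. \<bar>y$1\<bar> * f (cyl y)"
        "\<lambda>y. y$1 * f (cyl y)"] abs eq
    by auto
  moreover have "integral cyl_domain (\<lambda>y. y$1 * f (cyl y)) = integral\<^sup>L lborel f"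
    using int eq by (metis (no_types, lifting) integral_cong)
  ultimately show ?thesis ..
qed

lemma integral_angle_eq_gyro:
  fixes f :: "real^3 \<Rightarrow> real"
  assumes f: "continuous_on UNIV f"
  shows "(\<integral>\<theta>. indicator cyl_domain (vec3_of_triple (p, \<theta>)) *
              ((vec3_of_triple (p, \<theta>))$1 * f (cyl (vec3_of_triple (p, \<theta>)))) \<partial>lborel)
       = indicator ({0..} \<times> UNIV) p * (2*pi * gyro f (fst p) (snd p) * fst p)"
proof -
  obtain r u where p: "p = (r, u)" by (cases p)
  define c where "c = (\<lambda>\<theta>. f (vector [r * cos \<theta>, r * sin \<theta>, u]))"
  have T: "vec3_of_triple (p, \<theta>) = vector [r, u, \<theta>]" for \<theta>
    by (simp add: vec3_of_triple_def p)
  show ?thesis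
  proof (cases "r > 0")
    case False
    then show ?thesis
      by (cases "r = 0") (auto simp: p vec3_of_triple_def cyl_domain_def indicator_def)
  next
    case True
    have "continuous_on UNIV c" unfolding c_def
      by (rule continuous_on_compose2[OF f]) (auto simp: vector_3_eq_axis intro!: continuous_intros)
    then have "set_integrable lborel {0..2*pi} c"
      unfolding set_integrable_def
      by (intro borel_integrable_compact) (auto intro: continuous_on_subset)
    then have c: "set_integrable lborel {0<..<2*pi} c"
      by (rule set_integrable_subset) auto
    have "(\<integral>\<theta>. indicator cyl_domain (vec3_of_triple (p, \<theta>)) *
              ((vec3_of_triple (p, \<theta>))$1 * f (cyl (vec3_of_triple (p, \<theta>)))) \<partial>lborel)
        = (\<integral>\<theta>. r * (indicator {0<..<2*pi} \<theta> *\<^sub>R c \<theta>) \<partial>lborel)"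
      using True
      by (intro Bochner_Integration.integral_cong) (auto simp: T cyl_def c_def cyl_domain_def indicator_def)
    also have "\<dots> = r * integral {0<..<2*pi} c"
      using set_borel_integral_eq_integral(2)[OF c] by (simp add: set_lebesgue_integral_def)
    also have "\<dots> = indicator ({0..} \<times> UNIV) p * (2*pi * gyro f (fst p) (snd p) * fst p)"
      using True by (simp add: p gyro_def c_def indicator_def integral_open_interval_real)
    finally show ?thesis .
  qed
qed

lemma has_bochner_integral_gyro:
  fixes f :: "real^3 \<Rightarrow> real"
  assumes f: "continuous_on UNIV f" and I: "has_bochner_integral lborel f I"
  shows "has_bochner_integral lborel
           (\<lambda>p::real\<times>real. indicator ({0..} \<times> UNIV) p * (2*pi * gyro f (fst p) (snd p) * fst p)) I"
proof -
  have fi: "integrable lborel f" and fI: "integral\<^sup>L lborel f = I"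
    using I by (auto simp: has_bochner_integral_iff)
  note cov = cyl_change_of_variables[OF fi]
  define K where "K y = indicator cyl_domain y * (y$1 * f (cyl y))" for y :: "real^3"
  have [measurable]: "f \<in> borel_measurable borel" "cyl \<in> borel_measurable borel"
    "cyl_domain \<in> sets borel"
    using f continuous_on_cyl open_cyl_domain
    by (auto intro: borel_measurable_continuous_onI borel_open)
  have K_meas[measurable]: "K \<in> borel_measurable borel" unfolding K_def by measurable
  have "integrable lebesgue K"
    using cov unfolding set_integrable_def K_def by simp
  then have "integrable lborel K" by (simp add: integrable_completion)
  then have "integrable lborel (\<lambda>q. K (vec3_of_triple q))"
    unfolding distr_vec3_of_triple[symmetric] by (subst (asm) integrable_distr_eq) auto
  then have Kt: "integrable (lborel \<Otimes>\<^sub>M lborel) (\<lambda>q. K (vec3_of_triple q))"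
    by (simp add: lborel_prod)
  have "integral\<^sup>L lebesgue K = integral cyl_domain (\<lambda>y. y$1 * f (cyl y))"
    using set_lebesgue_integral_eq_integral(2)[OF cov[THEN conjunct1]]
    unfolding set_lebesgue_integral_def K_def by simp
  then have "integral\<^sup>L lborel K = I"
    using cov fI by (simp add: integral_completion)
  then have "integral\<^sup>L lborel (\<lambda>q. K (vec3_of_triple q)) = I"
    unfolding distr_vec3_of_triple[symmetric] by (subst (asm) integral_distr) auto
  moreover have "(\<lambda>p. \<integral>\<theta>. K (vec3_of_triple (p, \<theta>)) \<partial>lborel) =
      (\<lambda>p::real\<times>real. indicator ({0..} \<times> UNIV) p * (2*pi * gyro f (fst p) (snd p) * fst p))"
    unfolding K_def using integral_angle_eq_gyro[OF f] by auto
  ultimately show ?thesis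
    using lborel_pair.integrable_fst'[OF Kt] lborel_pair.integral_fst'[OF Kt]
    by (simp add: has_bochner_integral_iff lborel_prod)
qed

lemma DERIV_along_line:
  fixes g :: "'a::real_normed_vector \<Rightarrow> real"
  assumes g: "(g has_derivative g') (at x)"
  shows "((\<lambda>s. g (x + s *\<^sub>R u)) has_real_derivative g' u) (at 0)"
proof -
  have "((\<lambda>s. x + s *\<^sub>R u) has_derivative (\<lambda>s. s *\<^sub>R u)) (at 0)"
    by (rule derivative_eq_intros refl)+ simp
  from has_derivative_compose[OF this] g
  have "((\<lambda>s. g (x + s *\<^sub>R u)) has_derivative (\<lambda>s. g' (s *\<^sub>R u))) (at 0)"
    by (simp add: o_def)
  moreover have "(\<lambda>s. g' (s *\<^sub>R u)) = (*) (g' u)"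
    using has_derivative_bounded_linear[OF g] by (auto simp: linear_simps fun_eq_iff)
  ultimately show ?thesis by (simp add: has_field_derivative_def)
qed

lemma pdir_eq_derivative:
  fixes g :: "'a::real_normed_vector \<Rightarrow> real"
  assumes "(g has_derivative g') (at x)"
  shows "pdir u g x = g' u"
  unfolding pdir_def by (rule DERIV_imp_deriv[OF DERIV_along_line[OF assms]])

lemma derivative_eq_inner_grad3:
  fixes h :: "real^3 \<Rightarrow> real"
  assumes h: "(h has_derivative h') (at y)"
  shows "h' a = a \<bullet> grad3 h y"
proof -
  have lin: "linear h'" using has_derivative_linear[OF h] .
  have "h' a = h' (\<Sum>i\<in>UNIV. (a$i) *\<^sub>R axis i 1)"
    using basis_expansion[of a] by (simp add: scalar_mult_eq_scaleR)
  also have "\<dots> = (\<Sum>i\<in>UNIV. a$i * h' (axis i 1))"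
    by (simp add: linear_sum[OF lin] linear_scale[OF lin])
  also have "\<dots> = a \<bullet> grad3 h y"
    by (simp add: inner_vec_def grad3_def px_def pdir_eq_derivative[OF h])
  finally show ?thesis .
qed

lemma deriv_shift_0: "deriv (\<lambda>s. h (u + s)) 0 = deriv h (u::real)"
proof -
  have "(\<lambda>D. DERIV (\<lambda>s. h (u + s)) 0 :> D) = (\<lambda>D. DERIV h u :> D)"
    using DERIV_shift[of h _ 0 u] by (auto simp: fun_eq_iff add.commute)
  then show ?thesis unfolding deriv_def by simp
qed

lemma DERIV_even_0:
  fixes h :: "real \<Rightarrow> real"
  assumes h: "DERIV h 0 :> d" and even: "\<And>s. h (-s) = h s"
  shows "d = 0"
proof -
  have "DERIV (\<lambda>s. h (-s)) 0 :> d * (-1)"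
    by (rule DERIV_chain2[of h]) (use h in \<open>auto intro!: derivative_eq_intros\<close>)
  then have "DERIV h 0 :> - d" using even by simp
  then have "d = - d" using DERIV_unique[OF h] by blast
  then show ?thesis by simp
qed

lemma smooth_differentiable: "smooth g \<Longrightarrow> g differentiable (at x)"
  by (erule smooth.cases) auto

lemma smooth_pdir: "smooth g \<Longrightarrow> u \<in> Basis \<Longrightarrow> smooth (pdir u g)"
  by (erule smooth.cases) auto

lemma differentiable_at_Pair_snd:
  fixes g :: "'a::real_normed_vector \<times> 'b::real_normed_vector \<Rightarrow> real"
  assumes "g differentiable (at (x, v))"
  shows "(\<lambda>v. g (x, v)) differentiable (at v)"
proof -
  have "(\<lambda>v. (x, v)) differentiable (at v)"
    by (intro differentiable_Pair differentiable_const differentiable_ident)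
  then show ?thesis using differentiable_chain_at[of "\<lambda>v. (x, v)" v g] assms by (simp add: o_def)
qed

lemma smooth_differentiable_snd: "smooth g \<Longrightarrow> (\<lambda>v. g (x, v)) differentiable (at v)"
  by (intro differentiable_at_Pair_snd smooth_differentiable)

lemma wperp_sq: "(wperp v)^2 = (v$1)^2 + (v$2)^2"
  by (simp add: wperp_def)

lemma wperp_nonneg: "wperp v \<ge> 0"
  by (simp add: wperp_def)

lemma wperp_eq_0_iff: "wperp v = 0 \<longleftrightarrow> v$1 = 0 \<and> v$2 = 0"
  by (simp add: wperp_def add_nonneg_eq_0_iff)

lemma vperp_eq_0: "v$1 = 0 \<Longrightarrow> v$2 = 0 \<Longrightarrow> vperp v = 0"
  by (simp add: vperp_def vec_eq_iff forall_3)

section \<open>Gyration about the parallel axis\<close>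

definition rot :: "real \<Rightarrow> real^3 \<Rightarrow> real^3" where
  "rot s v = vector [v$1 * cos s - v$2 * sin s, v$1 * sin s + v$2 * cos s, v$3]"

lemma wperp_rot[simp]: "wperp (rot s v) = wperp v"
proof -
  have "\<And>a b c s :: real. (a * c - b * s)^2 + (a * s + b * c)^2 = (a^2 + b^2) * (s^2 + c^2)"
    by (simp add: power2_eq_square algebra_simps)
  then show ?thesis by (simp add: wperp_def rot_def)
qed

lemma rot_nth_3[simp]: "(rot s v)$3 = v$3"
  by (simp add: rot_def)

lemma rot_0[simp]: "rot 0 v = v"
  by (simp add: rot_def vec_eq_iff forall_3)

lemma rot_2pi[simp]: "rot (2*pi) v = v"
  by (simp add: rot_def vec_eq_iff forall_3)

lemma rot_vector_w_0: "rot \<theta> (vector [w, 0, u]) = vector [w * cos \<theta>, w * sin \<theta>, u]"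
  by (simp add: rot_def)

lemma ex_rot_eq: "\<exists>\<theta>. v = rot \<theta> (vector [wperp v, 0, v$3])"
proof (cases "wperp v = 0")
  case True
  then have "v = rot 0 (vector [wperp v, 0, v$3])"
    by (simp add: wperp_eq_0_iff vec_eq_iff forall_3)
  then show ?thesis ..
next
  case False
  define r where "r = wperp v"
  have r: "r > 0" using False wperp_nonneg[of v] by (simp add: r_def)
  have r2: "r^2 = (v$1)^2 + (v$2)^2" unfolding r_def by (rule wperp_sq)
  have "(v$1/r)^2 + (v$2/r)^2 = ((v$1)^2 + (v$2)^2) / r^2"
    by (simp add: power_divide add_divide_distrib)
  also have "\<dots> = 1"
    using r by (simp add: r2[symmetric])
  finally obtain \<theta> where "v$1/r = cos \<theta>" "v$2/r = sin \<theta>"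
    using sincos_total_2pi by metis
  then have "v = rot \<theta> (vector [r, 0, v$3])"
    using r by (auto simp: rot_def vec_eq_iff forall_3 field_simps)
  then show ?thesis unfolding r_def ..
qed

lemma rot_has_derivative:
  "((\<lambda>s. rot s v) has_derivative (\<lambda>d. d *\<^sub>R (- vperp (rot s v)))) (at s)"
proof -
  have a1: "((\<lambda>s. v$1 * cos s - v$2 * sin s) has_real_derivative (- v$1 * sin s - v$2 * cos s)) (at s)"
    by (auto intro!: derivative_eq_intros)
  have a2: "((\<lambda>s. v$1 * sin s + v$2 * cos s) has_real_derivative (v$1 * cos s - v$2 * sin s)) (at s)"
    by (auto intro!: derivative_eq_intros)
  have "((\<lambda>s. (v$1 * cos s - v$2 * sin s) *\<^sub>R axis 1 1 + (v$1 * sin s + v$2 * cos s) *\<^sub>R axis 2 1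
        + v$3 *\<^sub>R (axis 3 1 :: real^3))
     has_derivative (\<lambda>d. ((- v$1 * sin s - v$2 * cos s) * d) *\<^sub>R axis 1 1
        + ((v$1 * cos s - v$2 * sin s) * d) *\<^sub>R axis 2 1 + 0)) (at s)"
    by (intro has_derivative_add has_derivative_scaleR_left has_derivative_const
        a1[unfolded has_field_derivative_def, THEN has_derivative_eq_rhs]
        a2[unfolded has_field_derivative_def, THEN has_derivative_eq_rhs]) (auto simp: fun_eq_iff)
  then show ?thesis unfolding rot_def vector_3_eq_axis
    by (rule has_derivative_eq_rhs)
       (auto simp: fun_eq_iff vec_eq_iff forall_3 vperp_def algebra_simps axis_def)
qed

lemma DERIV_comp_rot:
  fixes h :: "real^3 \<Rightarrow> real"
  assumes h: "h differentiable (at (rot s v))"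
  shows "((\<lambda>s. h (rot s v)) has_real_derivative - (vperp (rot s v) \<bullet> grad3 h (rot s v))) (at s)"
proof -
  obtain h' where h': "(h has_derivative h') (at (rot s v))"
    using h by (auto simp: differentiable_def)
  have "((\<lambda>s. h (rot s v)) has_derivative (\<lambda>d. h' (d *\<^sub>R (- vperp (rot s v))))) (at s)"
    using has_derivative_compose[OF rot_has_derivative h'] by (simp add: o_def)
  moreover have "(\<lambda>d. h' (d *\<^sub>R (- vperp (rot s v)))) = (*) (- (vperp (rot s v) \<bullet> grad3 h (rot s v)))"
  proof
    fix d
    have "h' (d *\<^sub>R (- vperp (rot s v))) = d * h' (- vperp (rot s v))"
      by (subst linear_scale[OF has_derivative_linear[OF h']]) simp
    also have "h' (- vperp (rot s v)) = - vperp (rot s v) \<bullet> grad3 h (rot s v)"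
      by (rule derivative_eq_inner_grad3[OF h'])
    finally show "h' (d *\<^sub>R (- vperp (rot s v))) = - (vperp (rot s v) \<bullet> grad3 h (rot s v)) * d"
      by simp
  qed
  ultimately show ?thesis by (simp only: has_field_derivative_def)
qed

lemma DERIV_inner_rot: "((\<lambda>s. c \<bullet> rot s v) has_real_derivative c \<bullet> (- vperp (rot s v))) (at s)"
proof -
  have "((\<lambda>s. c \<bullet> rot s v) has_derivative (\<lambda>d. c \<bullet> (d *\<^sub>R (- vperp (rot s v))))) (at s)"
    by (rule has_derivative_inner_right[OF rot_has_derivative])
  moreover have "(\<lambda>d. c \<bullet> (d *\<^sub>R (- vperp (rot s v)))) = (*) (c \<bullet> (- vperp (rot s v)))"
    by (auto simp: fun_eq_iff)
  ultimately show ?thesis by (simp add: has_field_derivative_def)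
qed

section \<open>Gyrotropic functions\<close>

locale gyrotropic =
  fixes g :: "real^3 \<Rightarrow> real" and G :: "real \<Rightarrow> real \<Rightarrow> real"
  assumes differentiable: "\<And>v. g differentiable (at v)"
    and reduced: "\<And>v. g v = G (wperp v) (v$3)"
begin

lemma vperp_inner_grad3: "vperp v \<bullet> grad3 g v = 0"
proof -
  have "((\<lambda>s. g (rot s v)) has_real_derivative - (vperp v \<bullet> grad3 g v)) (at 0)"
    using DERIV_comp_rot[of g 0 v, OF differentiable] by simp
  moreover have "(\<lambda>s. g (rot s v)) = (\<lambda>s. g v)"
    by (simp add: reduced)
  ultimately show ?thesis
    using DERIV_unique[OF _ DERIV_const] by fastforce
qed

lemma px_3_eq_deriv: "px 3 g v = deriv (G (wperp v)) (v$3)"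
proof -
  have "wperp (v + s *\<^sub>R axis 3 1) = wperp v" "(v + s *\<^sub>R axis 3 1)$3 = v$3 + s" for s
    by (simp_all add: wperp_def axis_def)
  then have "px 3 g v = deriv (\<lambda>s. G (wperp v) (v$3 + s)) 0"
    unfolding px_def pdir_def by (simp only: reduced)
  then show ?thesis by (simp add: deriv_shift_0)
qed

lemma deriv_radial:
  assumes w: "wperp v > 0"
  shows "deriv (\<lambda>s. G s (v$3)) (wperp v) = (v$1 * px 1 g v + v$2 * px 2 g v) / wperp v"
proof -
  define w0 where "w0 = wperp v"
  define e :: "real^3" where "e = vector [v$1, v$2, 0]"
  define q where "q s = v + ((s - w0) / w0) *\<^sub>R e" for s
  obtain g' where g': "(g has_derivative g') (at v)"
    using differentiable[of v] by (auto simp: differentiable_def)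
  have w0: "w0 > 0" using w by (simp add: w0_def)
  have "(q has_derivative (\<lambda>d. (d / w0) *\<^sub>R e)) (at w0)"
    unfolding q_def
    by (rule has_derivative_eq_rhs, (rule derivative_eq_intros refl)+) (use w0 in \<open>auto simp: fun_eq_iff\<close>)
  from has_derivative_compose[OF this, of g g'] g'
  have "((\<lambda>s. g (q s)) has_derivative (\<lambda>d. g' ((d / w0) *\<^sub>R e))) (at w0)"
    by (simp add: o_def q_def)
  moreover have "(\<lambda>d. g' ((d / w0) *\<^sub>R e)) = (*) ((e \<bullet> grad3 g v) / w0)"
    using has_derivative_bounded_linear[OF g'] derivative_eq_inner_grad3[OF g', of e]
    by (auto simp: fun_eq_iff linear_simps)
  ultimately have D: "((\<lambda>s. g (q s)) has_real_derivative (e \<bullet> grad3 g v) / w0) (at w0)"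
    by (simp add: has_field_derivative_def)
  have radial: "g (q s) = G s (v$3)" if s: "s > 0" for s
  proof -
    have "1 + (s - w0) / w0 = s / w0" using w0 by (simp add: field_simps)
    then have "(q s)$1 = (s/w0) * v$1" "(q s)$2 = (s/w0) * v$2" "(q s)$3 = v$3"
      by (simp_all add: q_def e_def algebra_simps flip: \<open>1 + (s - w0) / w0 = s / w0\<close>)
    then have "wperp (q s) = sqrt ((s / w0)^2 * ((v$1)^2 + (v$2)^2))"
      by (simp only: wperp_def power_mult_distrib distrib_left)
    also have "\<dots> = (s / w0) * w0"
      using s w by (simp add: real_sqrt_mult w0_def wperp_def)
    also have "\<dots> = s" using w0 by simp
    finally show ?thesis using \<open>(q s)$3 = v$3\<close> by (simp add: reduced)
  qed
  have "((\<lambda>s. G s (v$3)) has_real_derivative (e \<bullet> grad3 g v) / w0) (at w0)"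
    by (rule has_field_derivative_transform_within_open[OF D, of "{0<..}"]) (use w0 radial in auto)
  then show ?thesis
    by (simp add: DERIV_imp_deriv w0_def e_def inner_vec_def sum_3 grad3_def)
qed

lemma px_eq_0_on_axis:
  assumes "v$1 = 0" "v$2 = 0" and i: "i = 1 \<or> i = 2"
  shows "px i g v = 0"
proof -
  obtain g' where g': "(g has_derivative g') (at v)"
    using differentiable[of v] by (auto simp: differentiable_def)
  have "wperp (v + (-s) *\<^sub>R axis i 1) = wperp (v + s *\<^sub>R axis i 1)"
    "(v + (-s) *\<^sub>R axis i 1)$3 = (v + s *\<^sub>R axis i 1)$3" for s
    using assms by (auto simp: wperp_def axis_def)
  then have "g' (axis i 1) = 0"
    by (intro DERIV_even_0[OF DERIV_along_line[OF g']]) (simp only: reduced)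
  then show ?thesis by (simp add: px_def pdir_eq_derivative[OF g'])
qed

lemma px_perp_eq:
  assumes w: "wperp v > 0"
  shows "px 1 g v = v$1 * deriv (\<lambda>s. G s (v$3)) (wperp v) / wperp v"
    and "px 2 g v = v$2 * deriv (\<lambda>s. G s (v$3)) (wperp v) / wperp v"
proof -
  have W: "(wperp v)^2 = (v$1)^2 + (v$2)^2" by (rule wperp_sq)
  have rot: "v$2 * px 1 g v = v$1 * px 2 g v"
    using vperp_inner_grad3[of v] by (simp add: inner_vec_def sum_3 vperp_def grad3_def)
  have "v$1 * (v$1 * px 1 g v + v$2 * px 2 g v) = (wperp v)^2 * px 1 g v"
    "v$2 * (v$1 * px 1 g v + v$2 * px 2 g v) = (wperp v)^2 * px 2 g v"
    unfolding W using rot by algebra+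
  then show "px 1 g v = v$1 * deriv (\<lambda>s. G s (v$3)) (wperp v) / wperp v"
    and "px 2 g v = v$2 * deriv (\<lambda>s. G s (v$3)) (wperp v) / wperp v"
    using w by (simp_all add: deriv_radial power2_eq_square field_simps)
qed

end

lemma gyrotropic_f0_of:
  assumes "smooth (\<lambda>(x, v). f0_of F t x v)"
  shows "gyrotropic (f0_of F t x) (F t x)"
proof
  show "f0_of F t x differentiable (at v)" for v
    using smooth_differentiable_snd[OF assms, of x v] by simp
  show "f0_of F t x v = F t x (wperp v) (v$3)" for v
    by (simp add: f0_of_def)
qed

section \<open>The first-order equation\<close>

definition perp_coeff :: "(real \<Rightarrow> real^3 \<Rightarrow> real \<Rightarrow> real \<Rightarrow> real) \<Rightarrow> (real \<Rightarrow> real^3 \<Rightarrow> real)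
    \<Rightarrow> 3 \<Rightarrow> real \<Rightarrow> real^3 \<Rightarrow> real \<Rightarrow> real \<Rightarrow> real" where
  "perp_coeff F phiF i t x w u =
     px i (\<lambda>y. F t y w u) x - px i (phiF t) x * deriv (\<lambda>s. F t x s u) w / w"

definition par_drift :: "(real \<Rightarrow> real^3 \<Rightarrow> real \<Rightarrow> real \<Rightarrow> real) \<Rightarrow> (real \<Rightarrow> real^3 \<Rightarrow> real)
    \<Rightarrow> real \<Rightarrow> real^3 \<Rightarrow> real \<Rightarrow> real \<Rightarrow> real" where
  "par_drift F phiF t x w u = u * px 3 (\<lambda>y. F t y w u) x - px 3 (phiF t) x * deriv (\<lambda>s. F t x w s) u"

definition transport_rhs :: "(real \<Rightarrow> real^3 \<Rightarrow> real \<Rightarrow> real \<Rightarrow> real) \<Rightarrow> (real \<Rightarrow> real^3 \<Rightarrow> real)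
    \<Rightarrow> real \<Rightarrow> real^3 \<Rightarrow> real^3 \<Rightarrow> real" where
  "transport_rhs F phiF t x v =
     v \<bullet> grad3 (\<lambda>y. f0_of F t y v) x + (- grad3 (phiF t) x) \<bullet> grad3 (f0_of F t x) v"

text \<open>Off the axis \<open>v\<^sub>\<perp> = 0\<close> this is \<open>-(1/b) e\<^sub>\<theta> \<bullet> G\<close>; it is written through Cartesian
  derivatives of \<open>f\<^sub>0\<close> so that it is differentiable across the axis.\<close>

definition f1_particular :: "(real \<Rightarrow> real^2 \<Rightarrow> real) \<Rightarrow> (real \<Rightarrow> real^3 \<Rightarrow> real \<Rightarrow> real \<Rightarrow> real)
    \<Rightarrow> (real \<Rightarrow> real^3 \<Rightarrow> real) \<Rightarrow> real \<Rightarrow> real^3 \<Rightarrow> real^3 \<Rightarrow> real" where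
  "f1_particular b F phiF t x v = - (1 / b t (xperp x)) *
     (- (v$2) * px 1 (\<lambda>y. f0_of F t y v) x + v$1 * px 2 (\<lambda>y. f0_of F t y v) x
      + px 1 (phiF t) x * px 2 (f0_of F t x) v - px 2 (phiF t) x * px 1 (f0_of F t x) v)"

lemma transport_rhs_off_axis:
  assumes sm: "smooth (\<lambda>(x, v). f0_of F t x v)" and w: "wperp v > 0"
  shows "transport_rhs F phiF t x v = v$1 * perp_coeff F phiF 1 t x (wperp v) (v$3)
     + v$2 * perp_coeff F phiF 2 t x (wperp v) (v$3) + par_drift F phiF t x (wperp v) (v$3)"
proof -
  interpret gyrotropic "f0_of F t x" "F t x" by (rule gyrotropic_f0_of[OF sm])
  have "px i (\<lambda>y. f0_of F t y v) x = px i (\<lambda>y. F t y (wperp v) (v$3)) x" for i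
    by (simp add: f0_of_def)
  then show ?thesis
    unfolding transport_rhs_def perp_coeff_def par_drift_def
    by (simp add: inner_vec_def sum_3 grad3_def px_perp_eq[OF w] px_3_eq_deriv algebra_simps)
qed

lemma transport_rhs_on_axis:
  assumes sm: "smooth (\<lambda>(x, v). f0_of F t x v)" and w: "wperp v = 0"
  shows "transport_rhs F phiF t x v = par_drift F phiF t x 0 (v$3)"
proof -
  interpret gyrotropic "f0_of F t x" "F t x" by (rule gyrotropic_f0_of[OF sm])
  have z: "v$1 = 0" "v$2 = 0" using w by (auto simp: wperp_eq_0_iff)
  have "px i (\<lambda>y. f0_of F t y v) x = px i (\<lambda>y. F t y (wperp v) (v$3)) x" for i
    by (simp add: f0_of_def)
  then show ?thesis
    unfolding transport_rhs_def par_drift_def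
    by (simp add: inner_vec_def sum_3 grad3_def px_eq_0_on_axis[OF z] px_3_eq_deriv z w)
qed

lemma f1_particular_off_axis:
  assumes sm: "smooth (\<lambda>(x, v). f0_of F t x v)" and w: "wperp v > 0"
  shows "f1_particular b F phiF t x v = - (1 / b t (xperp x)) *
     (v$1 * perp_coeff F phiF 2 t x (wperp v) (v$3) - v$2 * perp_coeff F phiF 1 t x (wperp v) (v$3))"
proof -
  interpret gyrotropic "f0_of F t x" "F t x" by (rule gyrotropic_f0_of[OF sm])
  have "px i (\<lambda>y. f0_of F t y v) x = px i (\<lambda>y. F t y (wperp v) (v$3)) x" for i
    by (simp add: f0_of_def)
  then show ?thesis
    unfolding f1_particular_def perp_coeff_def
    by (simp add: px_perp_eq[OF w] algebra_simps)
qed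

lemma f1_particular_eq_e_theta_Gvec:
  assumes sm: "smooth (\<lambda>(x, v). f0_of F t x v)" and w: "wperp v > 0"
  shows "f1_particular b F phiF t x v =
     - (1 / b t (xperp x)) * (e_theta v \<bullet> Gvec F phiF t x (wperp v) (v$3))"
  using f1_particular_off_axis[OF assms] w
  by (simp add: e_theta_def Gvec_def perp_coeff_def inner_vec_def sum_2 field_simps)

lemma f1_particular_differentiable:
  assumes sm: "smooth (\<lambda>(x, v). f0_of F t x v)"
  shows "f1_particular b F phiF t x differentiable (at v)"
proof -
  let ?f = "\<lambda>(x, v). f0_of F t x v"
  have "(\<lambda>v. pdir (axis i 1, 0) ?f (x, v)) differentiable (at v)"
    "(\<lambda>v. pdir (0, axis i 1) ?f (x, v)) differentiable (at v)" for i
    by (intro smooth_differentiable_snd smooth_pdir[OF sm]; simp add: Basis_prod_def)+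
  moreover have "(\<lambda>v. px i (\<lambda>y. f0_of F t y v) x) = (\<lambda>v. pdir (axis i 1, 0) ?f (x, v))"
    "px i (f0_of F t x) = (\<lambda>v. pdir (0, axis i 1) ?f (x, v))" for i
    by (simp_all add: px_def pdir_def fun_eq_iff)
  moreover have "(\<lambda>v::real^3. v$i) differentiable (at v)" for i
    by (rule bounded_linear_imp_differentiable[OF bounded_linear_vec_nth])
  ultimately show ?thesis unfolding f1_particular_def
    by (intro differentiable_mult differentiable_add differentiable_diff differentiable_minus
        differentiable_const) auto
qed

lemma DERIV_Lop_rot:
  assumes b: "b t (xperp x) \<noteq> 0" and f: "f t x differentiable (at (rot s v))"
  shows "((\<lambda>s. f t x (rot s v)) has_real_derivative Lop b f t x (rot s v) / b t (xperp x)) (at s)"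
  using DERIV_comp_rot[OF f] b by (simp add: Lop_def)

text \<open>Along the gyration circle through \<open>(w, 0, u)\<close>, \<open>f\<^sub>1\<close> differs from a linear function of
  \<open>rot s v\<close> by \<open>D s / b\<close>, with \<open>D\<close> the parallel drift; periodicity in \<open>s\<close> forces \<open>D = 0\<close>.\<close>

lemma par_drift_eq_0_if_solvable:
  assumes b: "b t (xperp x) \<noteq> 0" and sm: "smooth (\<lambda>(x, v). f0_of F t x v)"
    and f1: "\<And>v. f1 t x differentiable (at v)"
    and L: "\<And>v. Lop b f1 t x v = transport_rhs F phiF t x v"
    and w: "w \<ge> 0"
  shows "par_drift F phiF t x w u = 0"
proof (cases "w = 0")
  case True
  define v0 :: "real^3" where "v0 = vector [0, 0, u]"
  have "Lop b f1 t x v0 = 0" by (simp add: Lop_def v0_def vperp_eq_0)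
  moreover have "transport_rhs F phiF t x v0 = par_drift F phiF t x 0 u"
    using transport_rhs_on_axis[OF sm] by (simp add: v0_def wperp_eq_0_iff)
  ultimately show ?thesis using L[of v0] True by simp
next
  case False
  then have "w > 0" using w by simp
  define v0 :: "real^3" where "v0 = vector [w, 0, u]"
  define A1 A2 D where "A1 = perp_coeff F phiF 1 t x w u" and "A2 = perp_coeff F phiF 2 t x w u"
    and "D = par_drift F phiF t x w u"
  define a :: "real^3" where "a = vector [-A2, A1, 0]"
  have v0: "wperp v0 = w" "v0$3 = u" using w by (simp_all add: v0_def wperp_def)
  define H where "H s = f1 t x (rot s v0) - (a \<bullet> rot s v0 + D * s) / b t (xperp x)" for s
  have "DERIV H s :> 0" for s
  proof -
    have rhs: "transport_rhs F phiF t x (rot s v0) = (rot s v0)$1 * A1 + (rot s v0)$2 * A2 + D"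
      using transport_rhs_off_axis[OF sm, of "rot s v0"] \<open>w > 0\<close> by (simp add: v0 A1_def A2_def D_def)
    have "DERIV (\<lambda>s. a \<bullet> rot s v0 + D * s) s :> (rot s v0)$1 * A1 + (rot s v0)$2 * A2 + D"
      using DERIV_add[OF DERIV_inner_rot[of a v0 s] DERIV_cmult[OF DERIV_ident, of D]]
      by (simp add: a_def inner_vec_def sum_3 vperp_def algebra_simps)
    from DERIV_cdivide[OF this, of "b t (xperp x)"]
    have "DERIV (\<lambda>s. (a \<bullet> rot s v0 + D * s) / b t (xperp x)) s :> Lop b f1 t x (rot s v0) / b t (xperp x)"
      using rhs L[of "rot s v0"] by simp
    from DERIV_diff[OF DERIV_Lop_rot[of b t x f1 s v0, OF b f1] this]
    show ?thesis unfolding H_def by simp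
  qed
  then have "H (2*pi) = H 0" using DERIV_isconst_all by blast
  then have "(a \<bullet> v0 + D * (2*pi)) / b t (xperp x) = (a \<bullet> v0 + D * 0) / b t (xperp x)"
    by (simp add: H_def)
  then show ?thesis using b by (simp add: D_def field_simps)
qed

lemma Lop_f1_particular:
  assumes b: "b t (xperp x) \<noteq> 0" and sm: "smooth (\<lambda>(x, v). f0_of F t x v)"
    and drift: "\<And>w u. w \<ge> 0 \<Longrightarrow> par_drift F phiF t x w u = 0"
  shows "Lop b (f1_particular b F phiF) t x v = transport_rhs F phiF t x v"
proof (cases "wperp v = 0")
  case True
  then show ?thesis
    using transport_rhs_on_axis[OF sm True] drift[of 0]
    by (simp add: Lop_def vperp_eq_0 wperp_eq_0_iff)
next
  case False
  then have w: "wperp v > 0" using wperp_nonneg[of v] by simp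
  define A1 A2 where "A1 = perp_coeff F phiF 1 t x (wperp v) (v$3)"
    and "A2 = perp_coeff F phiF 2 t x (wperp v) (v$3)"
  define c :: "real^3" where "c = (- (1 / b t (xperp x))) *\<^sub>R vector [A2, -A1, 0]"
  have "f1_particular b F phiF t x (rot s v) = c \<bullet> rot s v" for s
    using f1_particular_off_axis[OF sm, of "rot s v" b phiF x] w
    by (simp add: A1_def A2_def c_def inner_vec_def sum_3 algebra_simps)
  then have "((\<lambda>s. f1_particular b F phiF t x (rot s v)) has_real_derivative c \<bullet> (- vperp v)) (at 0)"
    using DERIV_inner_rot[of c v 0] by simp
  moreover have "((\<lambda>s. f1_particular b F phiF t x (rot s v)) has_real_derivative
      Lop b (f1_particular b F phiF) t x v / b t (xperp x)) (at 0)"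
    using DERIV_Lop_rot[of b t x "f1_particular b F phiF" 0 v, OF b f1_particular_differentiable[OF sm]] by simp
  ultimately have "Lop b (f1_particular b F phiF) t x v = v$1 * A1 + v$2 * A2"
    using DERIV_unique b by (fastforce simp: c_def inner_vec_def sum_3 vperp_def field_simps)
  then show ?thesis
    using transport_rhs_off_axis[OF sm w, of phiF x] drift[OF wperp_nonneg, of v "v$3"]
    by (simp add: A1_def A2_def)
qed

lemma rot_invariant_diff_of_Lop_eq:
  assumes b: "b t (xperp x) \<noteq> 0"
    and f: "\<And>v. f t x differentiable (at v)" and g: "\<And>v. g t x differentiable (at v)"
    and L: "\<And>v. Lop b f t x v = Lop b g t x v"
  shows "f t x (rot s v) - g t x (rot s v) = f t x v - g t x v"
proof -
  have "DERIV (\<lambda>s. f t x (rot s v) - g t x (rot s v)) s :> 0" for s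
    using DERIV_diff[OF DERIV_Lop_rot[of b t x f s v, OF b f] DERIV_Lop_rot[of b t x g s v, OF b g]] L by simp
  then show ?thesis using DERIV_isconst_all[of "\<lambda>s. f t x (rot s v) - g t x (rot s v)" s 0] by simp
qed

lemma gyro_at_0: "gyro g 0 u = g (vector [0, 0, u])"
  by (simp add: gyro_def)

lemma gyro_eq_if_trig:
  assumes g: "\<And>\<theta>. g (vector [w * cos \<theta>, w * sin \<theta>, u]) = a * cos \<theta> + c * sin \<theta> + p"
  shows "gyro g w u = p"
proof -
  define \<Phi> where "\<Phi> \<theta> = a * sin \<theta> - c * cos \<theta> + p * \<theta>" for \<theta>
  have "(\<Phi> has_real_derivative a * cos \<theta> + c * sin \<theta> + p) (at \<theta>)" for \<theta>
    unfolding \<Phi>_def by (rule derivative_eq_intros refl)+ simp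
  then have "((\<lambda>\<theta>. a * cos \<theta> + c * sin \<theta> + p) has_integral \<Phi> (2*pi) - \<Phi> 0) {0..2*pi}"
    by (intro fundamental_theorem_of_calculus)
       (auto intro: has_vector_derivative_at_within simp: has_real_derivative_iff_has_vector_derivative)
  then show ?thesis
    by (simp add: gyro_def g integral_unique \<Phi>_def)
qed

text \<open>A solution differs from \<open>f1_particular\<close> by an element of the kernel of \<open>L\<close>, i.e. a
  function constant on gyration circles; since \<open>f1_particular\<close> is a first Fourier mode in the
  gyroangle, that constant is the gyroaverage of the solution.\<close>

lemma solution_eq_f1_particular_plus_gyro:
  assumes b: "b t (xperp x) \<noteq> 0" and sm: "smooth (\<lambda>(x, v). f0_of F t x v)"
    and f1: "\<And>v. f1 t x differentiable (at v)"
    and L: "\<And>v. Lop b f1 t x v = transport_rhs F phiF t x v"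
    and drift: "\<And>w u. w \<ge> 0 \<Longrightarrow> par_drift F phiF t x w u = 0"
    and w: "wperp v > 0"
  shows "f1 t x v = f1_particular b F phiF t x v + gyro (f1 t x) (wperp v) (v$3)"
proof -
  define v0 :: "real^3" where "v0 = vector [wperp v, 0, v$3]"
  define p where "p = f1 t x v0 - f1_particular b F phiF t x v0"
  have "Lop b f1 t x y = Lop b (f1_particular b F phiF) t x y" for y
    using L Lop_f1_particular[of b t x F phiF, OF b sm drift] by simp
  from rot_invariant_diff_of_Lop_eq[OF b f1 f1_particular_differentiable[OF sm] this]
  have on_circle: "f1 t x (rot \<theta> v0) = f1_particular b F phiF t x (rot \<theta> v0) + p" for \<theta>
    by (simp add: p_def algebra_simps)
  have v0: "wperp v0 = wperp v" "v0$3 = v$3"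
    using wperp_nonneg[of v] by (simp_all add: v0_def wperp_def)
  have "gyro (f1 t x) (wperp v) (v$3) = p"
  proof (rule gyro_eq_if_trig)
    fix \<theta>
    have "(rot \<theta> v0)$1 = wperp v * cos \<theta>" "(rot \<theta> v0)$2 = wperp v * sin \<theta>"
      by (simp_all add: v0_def rot_def)
    then have "f1 t x (rot \<theta> v0) =
      (- wperp v * perp_coeff F phiF 2 t x (wperp v) (v$3) / b t (xperp x)) * cos \<theta>
      + (wperp v * perp_coeff F phiF 1 t x (wperp v) (v$3) / b t (xperp x)) * sin \<theta> + p"
      using on_circle[of \<theta>] f1_particular_off_axis[OF sm, of "rot \<theta> v0" b phiF x] w
      by (simp add: v0 algebra_simps)
    then show "f1 t x (vector [wperp v * cos \<theta>, wperp v * sin \<theta>, v$3]) =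
      (- wperp v * perp_coeff F phiF 2 t x (wperp v) (v$3) / b t (xperp x)) * cos \<theta>
      + (wperp v * perp_coeff F phiF 1 t x (wperp v) (v$3) / b t (xperp x)) * sin \<theta> + p"
      by (simp add: v0_def rot_vector_w_0)
  qed
  moreover obtain \<theta> where "v = rot \<theta> v0"
    using ex_rot_eq[of v] by (auto simp: v0_def)
  ultimately show ?thesis using on_circle[of \<theta>] by simp
qed

lemma poisson_red_gyro:
  assumes phi: "poisson_full phi f" and f: "\<And>t x v. t \<ge> 0 \<Longrightarrow> f t x differentiable (at v)"
  shows "poisson_red phi (\<lambda>t x. gyro (f t x))"
  unfolding poisson_red_def
proof (intro allI impI)
  fix t x assume t: "t \<ge> (0::real)"
  have "continuous_on UNIV (f t x)"
    using f[OF t] by (intro continuous_at_imp_continuous_on ballI differentiable_imp_continuous_within)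
  then show "has_bochner_integral lborel
      (\<lambda>p. indicator ({0..} \<times> UNIV) p * (2 * pi * gyro (f t x) (fst p) (snd p) * fst p)) (- lap (phi t) x)"
    using has_bochner_integral_gyro phi t by (simp add: poisson_full_def)
qed

lemma solves_L1_iff:
  "solves_L1 b F phiF f1 \<longleftrightarrow>
     (\<forall>t\<ge>0. \<forall>x v. f1 t x differentiable (at v) \<and> Lop b f1 t x v = transport_rhs F phiF t x v)"
  by (simp add: solves_L1_def transport_rhs_def)

lemma drift_cond_iff:
  "drift_cond F phiF \<longleftrightarrow> (\<forall>t\<ge>0. \<forall>x w u. w \<ge> 0 \<longrightarrow> par_drift F phiF t x w u = 0)"
  by (simp add: drift_cond_def par_drift_def)

lemma solvable_iff_drift_cond:
  assumes b: "\<And>t y. t \<ge> 0 \<Longrightarrow> b t y \<noteq> 0"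
    and sm: "\<And>t. t \<ge> 0 \<Longrightarrow> smooth (\<lambda>(x, v). f0_of F t x v)"
  shows "(\<exists>f1. solves_L1 b F phiF f1) \<longleftrightarrow> drift_cond F phiF"
proof
  assume "\<exists>f1. solves_L1 b F phiF f1"
  then obtain f1 where f1: "solves_L1 b F phiF f1" ..
  show "drift_cond F phiF"
    unfolding drift_cond_iff
  proof (intro allI impI)
    fix t x w u assume t: "t \<ge> (0::real)" and w: "w \<ge> (0::real)"
    show "par_drift F phiF t x w u = 0"
      using f1 t
      by (intro par_drift_eq_0_if_solvable[of b t x F f1 phiF, OF b[OF t] sm[OF t] _ _ w])
         (auto simp: solves_L1_iff)
  qed
next
  assume drift: "drift_cond F phiF"
  have "solves_L1 b F phiF (f1_particular b F phiF)"
    unfolding solves_L1_iff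
  proof (intro allI impI conjI)
    fix t x v assume t: "t \<ge> (0::real)"
    show "f1_particular b F phiF t x differentiable (at v)"
      by (rule f1_particular_differentiable[OF sm[OF t]])
    show "Lop b (f1_particular b F phiF) t x v = transport_rhs F phiF t x v"
      using drift t
      by (intro Lop_f1_particular[of b t x F phiF, OF b[OF t] sm[OF t]]) (auto simp: drift_cond_iff)
  qed
  then show "\<exists>f1. solves_L1 b F phiF f1" by blast
qed

lemma solution_structure:
  assumes b: "\<And>t y. t \<ge> 0 \<Longrightarrow> b t y \<noteq> 0"
    and sm: "\<And>t. t \<ge> 0 \<Longrightarrow> smooth (\<lambda>(x, v). f0_of F t x v)"
    and "drift_cond F phiF" and "solves_L1 b F phiF f1"
    and phi1: "poisson_full phi1 f1" and E1: "\<forall>t\<ge>0. \<forall>x. E1 t x = - grad3 (phi1 t) x"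
  shows "\<exists>P phiP.
           (\<forall>t\<ge>0. \<forall>x v. wperp v \<noteq> 0 \<longrightarrow>
              f1 t x v = - (1 / b t (xperp x)) * (e_theta v \<bullet> Gvec F phiF t x (wperp v) (v$3))
                         + P t x (wperp v) (v$3)) \<and>
           (\<forall>t\<ge>0. \<forall>x v. wperp v = 0 \<longrightarrow> f1 t x v = P t x 0 (v$3)) \<and>
           poisson_red phiP P \<and>
           (\<forall>t\<ge>0. \<forall>x. E1 t x = - grad3 (phiP t) x) \<and>
           (\<forall>x w u. w \<ge> 0 \<longrightarrow> P 0 x w u = gyro (f1 0 x) w u)"
proof -
  have drift: "\<And>t x w u. t \<ge> 0 \<Longrightarrow> w \<ge> 0 \<Longrightarrow> par_drift F phiF t x w u = 0"
    and f1: "\<And>t x v. t \<ge> 0 \<Longrightarrow> f1 t x differentiable (at v)"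
    and L: "\<And>t x v. t \<ge> 0 \<Longrightarrow> Lop b f1 t x v = transport_rhs F phiF t x v"
    using assms(3,4) by (auto simp: drift_cond_iff solves_L1_iff)
  show ?thesis
  proof (intro exI[of _ "\<lambda>t x. gyro (f1 t x)"] exI[of _ phi1] conjI allI impI
      poisson_red_gyro[OF phi1 f1])
    fix t x v assume t: "t \<ge> (0::real)" and "wperp v \<noteq> 0"
    then have w: "wperp v > 0" using wperp_nonneg[of v] by simp
    show "f1 t x v = - (1 / b t (xperp x)) * (e_theta v \<bullet> Gvec F phiF t x (wperp v) (v$3))
        + gyro (f1 t x) (wperp v) (v$3)"
      using solution_eq_f1_particular_plus_gyro[of b t x F f1 phiF, OF b[OF t] sm[OF t] f1[OF t]
          L[OF t] drift[OF t] w]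
      by (simp add: f1_particular_eq_e_theta_Gvec[OF sm[OF t] w])
  next
    fix t x v assume "wperp v = 0"
    then have "vector [0, 0, v$3] = v"
      by (auto simp: wperp_eq_0_iff vec_eq_iff forall_3)
    then show "f1 t x v = gyro (f1 t x) 0 (v$3)"
      by (simp add: gyro_at_0)
  qed (use E1 in auto)
qed

theorem proposition4p3:
  fixes \<alpha> :: real
    and b :: "real \<Rightarrow> real^2 \<Rightarrow> real"
    and F :: "real \<Rightarrow> real^3 \<Rightarrow> real \<Rightarrow> real \<Rightarrow> real"
    and phiF :: "real \<Rightarrow> real^3 \<Rightarrow> real"
  assumes alpha_pos: "\<alpha> > 0"
    and b_lower: "\<forall>t\<ge>0. \<forall>y. b t y > \<alpha>"
    and b_bounded: "\<exists>M. \<forall>t\<ge>0. \<forall>y. \<bar>b t y\<bar> \<le> M"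
    and b_lipschitz: "\<exists>K. \<forall>t\<ge>0. \<forall>s\<ge>0. \<forall>y z. \<bar>b t y - b s z\<bar> \<le> K * dist (t, y) (s, z)"
    and f0_smooth: "\<forall>t\<ge>0. smooth (\<lambda>(x, v). f0_of F t x v)"
    and phiF_smooth: "\<forall>t\<ge>0. smooth (phiF t)"
    and phiF_poisson: "poisson_red phiF F"
  shows "((\<exists>f1. solves_L1 b F phiF f1) \<longleftrightarrow> drift_cond F phiF) \<and>
         (drift_cond F phiF \<longrightarrow>
         (\<forall>f1 phi1 E1. solves_L1 b F phiF f1 \<and> poisson_full phi1 f1 \<and>
            (\<forall>t\<ge>0. \<forall>x. E1 t x = - grad3 (phi1 t) x) \<longrightarrow>
          (\<exists>P phiP.
             (\<forall>t\<ge>0. \<forall>x v. wperp v \<noteq> 0 \<longrightarrow>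
                f1 t x v = - (1 / b t (xperp x)) * (e_theta v \<bullet> Gvec F phiF t x (wperp v) (v$3))
                           + P t x (wperp v) (v$3)) \<and>
             (\<forall>t\<ge>0. \<forall>x v. wperp v = 0 \<longrightarrow> f1 t x v = P t x 0 (v$3)) \<and>
             poisson_red phiP P \<and>
             (\<forall>t\<ge>0. \<forall>x. E1 t x = - grad3 (phiP t) x) \<and>
             (\<forall>x w u. w \<ge> 0 \<longrightarrow> P 0 x w u = gyro (f1 0 x) w u))))"
proof -
  have b: "\<And>t y. t \<ge> 0 \<Longrightarrow> b t y \<noteq> 0"
    using alpha_pos b_lower by (metis less_asym)
  have sm: "\<And>t. t \<ge> 0 \<Longrightarrow> smooth (\<lambda>(x, v). f0_of F t x v)"
    using f0_smooth by blast
  show ?thesis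
  proof (intro conjI impI allI)
    show "(\<exists>f1. solves_L1 b F phiF f1) \<longleftrightarrow> drift_cond F phiF"
      by (rule solvable_iff_drift_cond) (fact b sm)+
  qed (elim conjE, rule solution_structure; auto simp: b sm)
qed

end
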